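(* For any complex numbers $a,b,\alpha,\beta,\xi,\eta$ with $\beta a-\alpha b\neq0$, any natural number $n\ge1$, and any integer $k\ge0$ (with $k\le\lfloor n/2\rfloor$ in the first identity and $k\le\lfloor (n-1)/2\rfloor$ in the second), \[ \sum_{r=k}^{\lfloor n/2\rfloor}\binom{r}{k}\Psi\left(\begin{array}{cc|c} a & b & n \\ \alpha & \beta & r \end{array}\right)\xi^{\lfloor n/2\rfloor-r}\eta^{r-k}=\Psi\left(\begin{array}{cc|c} a\xi-\alpha\eta & b\xi-\beta\eta & n \\ \alpha & \beta & k \end{array}\right), \] \[ \sum_{r=k}^{\lfloor (n-1)/2\rfloor}\binom{r}{k}\Phi\left(\begin{array}{cc|c} a & b & n \\ \alpha & \beta & r \end{array}\right)\xi^{\lfloor (n-1)/2\rfloor-r}\eta^{r-k}=\Phi\left(\begin{array}{cc|c} a\xi-\alpha\eta & b\xi-\beta\eta & n \\ \alpha & \beta & k \end{array}\right). \]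
   Context: $\delta(m)=1$ for $m$ odd, $0$ for $m$ even; $\lfloor\cdot\rfloor$ is the floor. For indeterminates $a,b,\alpha,\beta$ and $n\ge1$, $\Psi\left(\begin{array}{cc|c} a & b & n \\ \alpha & \beta & r \end{array}\right)$ ($0\le r\le\lfloor n/2\rfloor$) and $\Phi\left(\begin{array}{cc|c} a & b & n \\ \alpha & \beta & r \end{array}\right)$ ($0\le r\le\lfloor (n-1)/2\rfloor$) are the unique polynomials in $\mathbb{Z}[a,b,\alpha,\beta]$ such that, identically in $x,y$, $(\beta a-\alpha b)^{\lfloor n/2\rfloor}\frac{x^n+y^n}{(x+y)^{\delta(n)}}=\sum_{r}\Psi\left(\begin{array}{cc|c} a & b & n \\ \alpha & \beta & r \end{array}\right)(\alpha x^2+\beta xy+\alpha y^2)^{\lfloor n/2\rfloor-r}(ax^2+bxy+ay^2)^r$ and $(\beta a-\alpha b)^{\lfloor (n-1)/2\rfloor}\frac{x^n-y^n}{(x-y)(x+y)^{\delta(n-1)}}=\sum_{r}\Phi\left(\begin{array}{cc|c} a & b & n \\ \alpha & \beta & r \end{array}\right)(\alpha x^2+\beta xy+\alpha y^2)^{\lfloor (n-1)/2\rfloor-r}(ax^2+bxy+ay^2)^r$; for numerical arguments these polynomials are evaluated. *)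

theory Defs
  imports Complex_Main
begin

text \<open>Polynomials in Z[a,b,alpha,beta] are represented by their finitely supported
  coefficient functions (exponent tuple (i,j,k,l) for a^i b^j alpha^k beta^l).\<close>

type_synonym mpoly4 = "nat \<times> nat \<times> nat \<times> nat \<Rightarrow> int"

definition mp_eval :: "mpoly4 \<Rightarrow> complex \<Rightarrow> complex \<Rightarrow> complex \<Rightarrow> complex \<Rightarrow> complex" where
  "mp_eval e a b al be =
     (\<Sum>(i,j,k,l)\<in>{t. e t \<noteq> 0}. of_int (e (i,j,k,l)) * a^i * b^j * al^k * be^l)"

text \<open>The defining identities, with the exact quotient by (x+y)^delta resp.
  (x-y)(x+y)^delta multiplied out; a polynomial identity over Z is the same as
  an identity of evaluations at all complex points.\<close>

definition is_Psi_family :: "nat \<Rightarrow> (nat \<Rightarrow> mpoly4) \<Rightarrow> bool" where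
  "is_Psi_family n c \<longleftrightarrow>
     (\<forall>r. finite {t. c r t \<noteq> 0}) \<and> (\<forall>r. n div 2 < r \<longrightarrow> c r = (\<lambda>_. 0)) \<and>
     (\<forall>a b al be x y :: complex.
        (be*a - al*b)^(n div 2) * (x^n + y^n) =
        (x+y)^(n mod 2) * (\<Sum>r\<le>n div 2. mp_eval (c r) a b al be *
            (al*x^2 + be*x*y + al*y^2)^(n div 2 - r) * (a*x^2 + b*x*y + a*y^2)^r))"

definition is_Phi_family :: "nat \<Rightarrow> (nat \<Rightarrow> mpoly4) \<Rightarrow> bool" where
  "is_Phi_family n c \<longleftrightarrow>
     (\<forall>r. finite {t. c r t \<noteq> 0}) \<and> (\<forall>r. (n - 1) div 2 < r \<longrightarrow> c r = (\<lambda>_. 0)) \<and>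
     (\<forall>a b al be x y :: complex.
        (be*a - al*b)^((n - 1) div 2) * (x^n - y^n) =
        (x - y) * (x+y)^((n - 1) mod 2) * (\<Sum>r\<le>(n - 1) div 2. mp_eval (c r) a b al be *
            (al*x^2 + be*x*y + al*y^2)^((n - 1) div 2 - r) * (a*x^2 + b*x*y + a*y^2)^r))"

definition Psi :: "nat \<Rightarrow> nat \<Rightarrow> complex \<Rightarrow> complex \<Rightarrow> complex \<Rightarrow> complex \<Rightarrow> complex" where
  "Psi n r a b al be = mp_eval ((THE c. is_Psi_family n c) r) a b al be"

definition Phi :: "nat \<Rightarrow> nat \<Rightarrow> complex \<Rightarrow> complex \<Rightarrow> complex \<Rightarrow> complex \<Rightarrow> complex" where
  "Phi n r a b al be = mp_eval ((THE c. is_Phi_family n c) r) a b al be"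

end

theory Submission
  imports Defs "HOL-Library.Product_Plus"
begin

text \<open>Write \<open>Q = \<alpha>x\<^sup>2 + \<beta>xy + \<alpha>y\<^sup>2\<close>, \<open>P = ax\<^sup>2 + bxy + ay\<^sup>2\<close> and \<open>D = \<beta>a - \<alpha>b\<close>. Since
  \<open>D(x\<^sup>2 + y\<^sup>2) = \<beta>P - bQ\<close> and \<open>Dxy = aQ - \<alpha>P\<close>, the recurrence
  \<open>s\<^sub>m\<^sub>+\<^sub>2 = (x\<^sup>2 + y\<^sup>2) s\<^sub>m\<^sub>+\<^sub>1 - (xy)\<^sup>2 s\<^sub>m\<close> satisfied by \<open>x\<^sup>2\<^sup>m \<plusminus> y\<^sup>2\<^sup>m\<close> and its quotients
  produces the families \<open>\<Psi>\<close> and \<open>\<Phi>\<close>. They are unique: for \<open>D \<noteq> 0\<close> the pair \<open>(Q, P)\<close> takes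
  almost every value \<open>(1, p)\<close>, so the numerical coefficients are determined, and an integer
  polynomial vanishing off \<open>D = 0\<close> is zero by continuity and Kronecker substitution.
  For the identity, \<open>(a, b) \<mapsto> (a\<xi> - \<alpha>\<eta>, b\<xi> - \<beta>\<eta>)\<close> turns \<open>P\<close> into \<open>\<xi>P - \<eta>Q\<close> and
  \<open>D\<close> into \<open>\<xi>D\<close>; expanding \<open>\<xi>P = (\<xi>P - \<eta>Q) + \<eta>Q\<close> binomially rewrites the defining identity
  at \<open>(a, b)\<close> as one at the new point whose coefficients are the left-hand sides, and
  uniqueness identifies them with \<open>\<Psi>\<close> resp. \<open>\<Phi>\<close> there. The case \<open>\<xi> = 0\<close> follows by continuity.\<close>

definition monom4 :: "nat \<times> nat \<times> nat \<times> nat \<Rightarrow> complex \<Rightarrow> complex \<Rightarrow> complex \<Rightarrow> complex \<Rightarrow> complex" where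
  "monom4 t a b al be = (case t of (i, j, k, l) \<Rightarrow> a^i * b^j * al^k * be^l)"

lemma monom4_add: "monom4 (s + t) a b al be = monom4 s a b al be * monom4 t a b al be"
  by (cases s; cases t) (simp add: monom4_def power_add)

lemma mp_eval_conv_monom4:
  "mp_eval e a b al be = (\<Sum>t | e t \<noteq> 0. of_int (e t) * monom4 t a b al be)"
  unfolding mp_eval_def monom4_def by (rule sum.cong) (auto split: prod.splits)

lemma mp_eval_superset:
  assumes "finite S" "{t. e t \<noteq> 0} \<subseteq> S"
  shows "mp_eval e a b al be = (\<Sum>t\<in>S. of_int (e t) * monom4 t a b al be)"
  unfolding mp_eval_conv_monom4 by (rule sum.mono_neutral_left) (use assms in auto)

lemma mp_eval_add:
  assumes "finite {t. e1 t \<noteq> 0}" "finite {t. e2 t \<noteq> 0}"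
  shows "mp_eval (\<lambda>t. e1 t + e2 t) a b al be = mp_eval e1 a b al be + mp_eval e2 a b al be"
proof -
  let ?S = "{t. e1 t \<noteq> 0} \<union> {t. e2 t \<noteq> 0}"
  have "finite ?S" using assms by simp
  then show ?thesis
    by (subst (1 2 3) mp_eval_superset[of ?S]) (auto simp: sum.distrib distrib_right)
qed

lemma mp_eval_uminus: "mp_eval (\<lambda>t. - e t) a b al be = - mp_eval e a b al be"
  unfolding mp_eval_conv_monom4 by (simp add: sum_negf)

lemma mp_eval_diff:
  assumes "finite {t. e1 t \<noteq> 0}" "finite {t. e2 t \<noteq> 0}"
  shows "mp_eval (\<lambda>t. e1 t - e2 t) a b al be = mp_eval e1 a b al be - mp_eval e2 a b al be"
  using mp_eval_add[of e1 "\<lambda>t. - e2 t"] assms by (simp add: mp_eval_uminus)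

lemma continuous_mp_eval [continuous_intros]:
  assumes "continuous F f1" "continuous F f2" "continuous F f3" "continuous F f4"
  shows "continuous F (\<lambda>z. mp_eval e (f1 z) (f2 z) (f3 z) (f4 z))"
  unfolding mp_eval_conv_monom4
proof (intro continuous_sum continuous_mult continuous_const)
  fix t :: "nat \<times> nat \<times> nat \<times> nat"
  show "continuous F (\<lambda>z. monom4 t (f1 z) (f2 z) (f3 z) (f4 z))"
    by (cases t) (simp add: monom4_def, intro continuous_intros assms)
qed

lemma add_mult_eq_add_mult_iff:
  fixes N :: nat
  assumes "i < N" "i' < N"
  shows "i + N * x = i' + N * x' \<longleftrightarrow> i = i' \<and> x = x'"
proof
  assume eq: "i + N * x = i' + N * x'"
  have "i = (i + N * x) mod N" using assms(1) by simp
  also have "\<dots> = i'" using eq assms(2) by simp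
  finally have "i = i'" .
  moreover have "N > 0" using assms(1) by simp
  ultimately show "i = i' \<and> x = x'" using eq by simp
qed simp

lemma monom4_kronecker:
  "monom4 (i, j, k, l) z (z^N) (z^(N^2)) (z^(N^3)) = z^(i + N * (j + N * (k + N * l)))"
  by (simp add: monom4_def power_add power_mult distrib_left mult.assoc power2_eq_square power3_eq_cube)

lemma inj_on_kronecker:
  fixes N :: nat
  shows "inj_on (\<lambda>(i, j, k, l). i + N * (j + N * (k + N * l))) {(i, j, k, l). i < N \<and> j < N \<and> k < N}"
proof (rule inj_onI)
  fix s t :: "nat \<times> nat \<times> nat \<times> nat"
  assume "s \<in> {(i, j, k, l). i < N \<and> j < N \<and> k < N}" "t \<in> {(i, j, k, l). i < N \<and> j < N \<and> k < N}"
    and "(\<lambda>(i, j, k, l). i + N * (j + N * (k + N * l))) s = (\<lambda>(i, j, k, l). i + N * (j + N * (k + N * l))) t"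
  then show "s = t"
    by (cases s; cases t) (simp add: add_mult_eq_add_mult_iff)
qed

text \<open>Kronecker substitution \<open>(a, b, \<alpha>, \<beta>) = (z, z^N, z^N\<^sup>2, z^N\<^sup>3)\<close> with \<open>N\<close> exceeding every
  exponent turns a polynomial in four variables into one in \<open>z\<close> without merging monomials.\<close>

lemma mp_eval_eq_0_imp_coeff_eq_0:
  assumes fin: "finite {t. e t \<noteq> 0}" and zero: "\<And>a b al be. mp_eval e a b al be = 0"
  shows "e t0 = 0"
proof (rule ccontr)
  assume t0: "e t0 \<noteq> 0"
  define S where "S = {t. e t \<noteq> 0}"
  define N where "N = Suc (\<Sum>(i, j, k, l)\<in>S. i + j + k + l)"
  define \<kappa> where "\<kappa> = (\<lambda>(i, j, k, l). i + N * (j + N * (k + N * l)))"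
  have "S \<subseteq> {(i, j, k, l). i < N \<and> j < N \<and> k < N}"
  proof clarify
    fix i j k l assume "(i, j, k, l) \<in> S"
    from member_le_sum[OF this, of "\<lambda>(i, j, k, l). i + j + k + l"] fin
    show "i < N \<and> j < N \<and> k < N" unfolding N_def S_def by auto
  qed
  then have "inj_on \<kappa> S" unfolding \<kappa>_def by (rule inj_on_subset[OF inj_on_kronecker])
  then have fibre: "{t \<in> S. \<kappa> t = \<kappa> t0} = {t0}"
    using t0 unfolding S_def inj_on_def by blast
  define M where "M = Max (\<kappa> ` S)"
  have "\<kappa> ` S \<subseteq> {..M}" using fin by (auto simp: M_def S_def)
  have "(\<Sum>d\<le>M. (\<Sum>t | t \<in> S \<and> \<kappa> t = d. of_int (e t)) * z^d) = 0" for z :: complex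
  proof -
    have "monom4 t z (z^N) (z^(N^2)) (z^(N^3)) = z^(\<kappa> t)" for t
      by (cases t) (simp add: \<kappa>_def monom4_kronecker)
    then have "0 = (\<Sum>t\<in>S. of_int (e t) * z^(\<kappa> t))"
      using zero[of z "z^N" "z^(N^2)" "z^(N^3)"] by (simp add: mp_eval_conv_monom4 S_def)
    also have "\<dots> = (\<Sum>d\<le>M. \<Sum>t | t \<in> S \<and> \<kappa> t = d. of_int (e t) * z^(\<kappa> t))"
      using fin \<open>\<kappa> ` S \<subseteq> {..M}\<close> by (intro sum.group[symmetric]) (auto simp: S_def)
    finally show ?thesis by (simp add: sum_distrib_right)
  qed
  then have "\<forall>d\<le>M. (\<Sum>t | t \<in> S \<and> \<kappa> t = d. of_int (e t)) = (0::complex)"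
    by (subst polyfun_eq_0[symmetric]) blast
  moreover have "\<kappa> t0 \<le> M" using \<open>\<kappa> ` S \<subseteq> {..M}\<close> t0 by (auto simp: S_def)
  ultimately have "(\<Sum>t\<in>{t \<in> S. \<kappa> t = \<kappa> t0}. of_int (e t)) = (0::complex)"
    by blast
  then show False using t0 unfolding fibre by simp
qed

definition mpoly4_fun :: "(complex \<Rightarrow> complex \<Rightarrow> complex \<Rightarrow> complex \<Rightarrow> complex) \<Rightarrow> bool" where
  "mpoly4_fun f \<longleftrightarrow> (\<exists>e. finite {t. e t \<noteq> 0} \<and> f = mp_eval e)"

lemma mpoly4_fun_scaled_monom4: "mpoly4_fun (\<lambda>a b al be. of_int c * monom4 t a b al be)"
proof -
  let ?e = "\<lambda>s. if s = t then c else 0"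
  have "finite {s. ?e s \<noteq> 0}" by (rule finite_subset[of _ "{t}"]) auto
  moreover have "mp_eval ?e a b al be = of_int c * monom4 t a b al be" for a b al be
    by (subst mp_eval_superset[of "{t}"]) auto
  ultimately show ?thesis unfolding mpoly4_fun_def by (intro exI[of _ ?e]) (auto intro!: ext)
qed

lemma mpoly4_fun_const: "mpoly4_fun (\<lambda>a b al be. of_int c)"
  using mpoly4_fun_scaled_monom4[of c "(0, 0, 0, 0)"] by (simp add: monom4_def)

lemma mpoly4_fun_vars:
  "mpoly4_fun (\<lambda>a b al be. a)" "mpoly4_fun (\<lambda>a b al be. b)"
  "mpoly4_fun (\<lambda>a b al be. al)" "mpoly4_fun (\<lambda>a b al be. be)"
  using mpoly4_fun_scaled_monom4[of 1 "(1, 0, 0, 0)"] mpoly4_fun_scaled_monom4[of 1 "(0, 1, 0, 0)"]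
    mpoly4_fun_scaled_monom4[of 1 "(0, 0, 1, 0)"] mpoly4_fun_scaled_monom4[of 1 "(0, 0, 0, 1)"]
  by (simp_all add: monom4_def)

lemma mpoly4_fun_add:
  assumes "mpoly4_fun f" "mpoly4_fun g"
  shows "mpoly4_fun (\<lambda>a b al be. f a b al be + g a b al be)"
proof -
  obtain e1 e2 where "finite {t. e1 t \<noteq> 0}" "f = mp_eval e1" "finite {t. e2 t \<noteq> 0}" "g = mp_eval e2"
    using assms unfolding mpoly4_fun_def by blast
  moreover from this have "finite {t. e1 t + e2 t \<noteq> 0}"
    by (rule_tac finite_subset[of _ "{t. e1 t \<noteq> 0} \<union> {t. e2 t \<noteq> 0}"]) auto
  ultimately show ?thesis
    unfolding mpoly4_fun_def by (intro exI[of _ "\<lambda>t. e1 t + e2 t"]) (auto intro!: ext simp: mp_eval_add)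
qed

lemma mpoly4_fun_uminus:
  assumes "mpoly4_fun f"
  shows "mpoly4_fun (\<lambda>a b al be. - f a b al be)"
proof -
  obtain e where "finite {t. e t \<noteq> 0}" "f = mp_eval e"
    using assms unfolding mpoly4_fun_def by blast
  then show ?thesis
    unfolding mpoly4_fun_def by (intro exI[of _ "\<lambda>t. - e t"]) (auto intro!: ext simp: mp_eval_uminus)
qed

lemma mpoly4_fun_diff:
  "mpoly4_fun f \<Longrightarrow> mpoly4_fun g \<Longrightarrow> mpoly4_fun (\<lambda>a b al be. f a b al be - g a b al be)"
  using mpoly4_fun_add[of f "\<lambda>a b al be. - g a b al be"] mpoly4_fun_uminus[of g] by simp

lemma mpoly4_fun_sum:
  "finite A \<Longrightarrow> (\<And>i. i \<in> A \<Longrightarrow> mpoly4_fun (f i)) \<Longrightarrow> mpoly4_fun (\<lambda>a b al be. \<Sum>i\<in>A. f i a b al be)"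
  by (induction A rule: finite_induct) (use mpoly4_fun_const[of 0] in \<open>auto intro: mpoly4_fun_add\<close>)

lemma mpoly4_fun_mult:
  assumes "mpoly4_fun f" "mpoly4_fun g"
  shows "mpoly4_fun (\<lambda>a b al be. f a b al be * g a b al be)"
proof -
  obtain e1 e2 where fin: "finite {t. e1 t \<noteq> 0}" "finite {t. e2 t \<noteq> 0}"
    and fg: "f = mp_eval e1" "g = mp_eval e2"
    using assms unfolding mpoly4_fun_def by blast
  have "f a b al be * g a b al be =
      (\<Sum>s | e1 s \<noteq> 0. \<Sum>t | e2 t \<noteq> 0. of_int (e1 s * e2 t) * monom4 (s + t) a b al be)" for a b al be
    unfolding fg mp_eval_conv_monom4 sum_product
    by (intro sum.cong refl) (simp add: monom4_add mult_ac)
  moreover have "mpoly4_fun (\<lambda>a b al be.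
      \<Sum>s | e1 s \<noteq> 0. \<Sum>t | e2 t \<noteq> 0. of_int (e1 s * e2 t) * monom4 (s + t) a b al be)"
    using fin(1)
  proof (rule mpoly4_fun_sum)
    show "mpoly4_fun (\<lambda>a b al be. \<Sum>t | e2 t \<noteq> 0. of_int (e1 s * e2 t) * monom4 (s + t) a b al be)" for s
      using fin(2) by (rule mpoly4_fun_sum) (rule mpoly4_fun_scaled_monom4)
  qed
  ultimately show ?thesis by simp
qed

definition qform :: "complex \<Rightarrow> complex \<Rightarrow> complex \<Rightarrow> complex \<Rightarrow> complex" where
  "qform c d x y = c*x^2 + d*x*y + c*y^2"

definition qform_expressible :: "nat \<Rightarrow> (complex \<Rightarrow> complex \<Rightarrow> complex) \<Rightarrow> bool" where
  "qform_expressible m s \<longleftrightarrow> (\<exists>F. (\<forall>r. mpoly4_fun (F r)) \<and>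
     (\<forall>a b al be x y. (be*a - al*b)^m * s x y =
        (\<Sum>r\<le>m. F r a b al be * qform al be x y^(m - r) * qform a b x y^r)))"

lemma qform_expressible_const: "qform_expressible 0 (\<lambda>x y. of_int c)"
  unfolding qform_expressible_def
  by (intro exI[of _ "\<lambda>r a b al be. of_int c"]) (simp add: mpoly4_fun_const)

lemma qform_expressible_add:
  assumes "qform_expressible m s1" "qform_expressible m s2"
  shows "qform_expressible m (\<lambda>x y. s1 x y + s2 x y)"
proof -
  obtain F1 F2 where "\<forall>r. mpoly4_fun (F1 r)" "\<forall>r. mpoly4_fun (F2 r)"
    and "\<forall>a b al be x y. (be*a - al*b)^m * s1 x y =
        (\<Sum>r\<le>m. F1 r a b al be * qform al be x y^(m - r) * qform a b x y^r)"
    and "\<forall>a b al be x y. (be*a - al*b)^m * s2 x y =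
        (\<Sum>r\<le>m. F2 r a b al be * qform al be x y^(m - r) * qform a b x y^r)"
    using assms unfolding qform_expressible_def by blast
  then show ?thesis
    unfolding qform_expressible_def
    by (intro exI[of _ "\<lambda>r a b al be. F1 r a b al be + F2 r a b al be"])
      (simp add: mpoly4_fun_add distrib_left distrib_right sum.distrib)
qed

lemma qform_expressible_diff:
  assumes "qform_expressible m s1" "qform_expressible m s2"
  shows "qform_expressible m (\<lambda>x y. s1 x y - s2 x y)"
proof -
  obtain F1 F2 where "\<forall>r. mpoly4_fun (F1 r)" "\<forall>r. mpoly4_fun (F2 r)"
    and "\<forall>a b al be x y. (be*a - al*b)^m * s1 x y =
        (\<Sum>r\<le>m. F1 r a b al be * qform al be x y^(m - r) * qform a b x y^r)"
    and "\<forall>a b al be x y. (be*a - al*b)^m * s2 x y =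
        (\<Sum>r\<le>m. F2 r a b al be * qform al be x y^(m - r) * qform a b x y^r)"
    using assms unfolding qform_expressible_def by blast
  then show ?thesis
    unfolding qform_expressible_def
    by (intro exI[of _ "\<lambda>r a b al be. F1 r a b al be - F2 r a b al be"])
      (simp add: mpoly4_fun_diff right_diff_distrib left_diff_distrib sum_subtractf)
qed

lemma binary_form_mult_linear:
  fixes f :: "nat \<Rightarrow> 'a::comm_ring_1"
  shows "(v * P + u * Q) * (\<Sum>r\<le>m. f r * Q^(m - r) * P^r) =
    (\<Sum>r\<le>Suc m. ((if r \<le> m then u * f r else 0) + (if r = 0 then 0 else v * f (r - 1))) *
        Q^(Suc m - r) * P^r)"
proof -
  have "(\<Sum>r\<le>Suc m. (if r \<le> m then u * f r else 0) * Q^(Suc m - r) * P^r) =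
      u * Q * (\<Sum>r\<le>m. f r * Q^(m - r) * P^r)"
    unfolding sum.atMost_Suc sum_distrib_left by (auto intro!: sum.cong simp: Suc_diff_le)
  moreover have "(\<Sum>r\<le>Suc m. (if r = 0 then 0 else v * f (r - 1)) * Q^(Suc m - r) * P^r) =
      v * P * (\<Sum>r\<le>m. f r * Q^(m - r) * P^r)"
    unfolding sum.atMost_Suc_shift sum_distrib_left by (auto intro!: sum.cong)
  ultimately show ?thesis
    unfolding distrib_right sum.distrib by (simp add: algebra_simps)
qed

lemma qform_expressible_mult_linear:
  assumes cP: "mpoly4_fun cP" and cQ: "mpoly4_fun cQ"
    and g: "\<And>a b al be x y. (be*a - al*b) * g x y =
      cP a b al be * qform a b x y + cQ a b al be * qform al be x y"
    and s: "qform_expressible m s"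
  shows "qform_expressible (Suc m) (\<lambda>x y. g x y * s x y)"
proof -
  obtain F where F: "\<And>r. mpoly4_fun (F r)"
    and s_eq: "\<And>a b al be x y. (be*a - al*b)^m * s x y =
        (\<Sum>r\<le>m. F r a b al be * qform al be x y^(m - r) * qform a b x y^r)"
    using s unfolding qform_expressible_def by blast
  define G where "G r a b al be =
      (if r \<le> m then cQ a b al be * F r a b al be else 0) +
      (if r = 0 then 0 else cP a b al be * F (r - 1) a b al be)" for r a b al be
  have "mpoly4_fun (G r)" for r
    unfolding G_def using mpoly4_fun_const[of 0]
    by (cases "r \<le> m"; cases "r = 0") (auto intro!: mpoly4_fun_add mpoly4_fun_mult cP cQ F)
  moreover have "(be*a - al*b)^Suc m * (g x y * s x y) =
      (\<Sum>r\<le>Suc m. G r a b al be * qform al be x y^(Suc m - r) * qform a b x y^r)" for a b al be x y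
  proof -
    have "(be*a - al*b)^Suc m * (g x y * s x y) = ((be*a - al*b) * g x y) * ((be*a - al*b)^m * s x y)"
      by (simp add: algebra_simps)
    then show ?thesis unfolding g s_eq binary_form_mult_linear G_def .
  qed
  ultimately show ?thesis unfolding qform_expressible_def by (intro exI[of _ G]) simp
qed

lemma qform_expressible_mult_sum_squares:
  "qform_expressible m s \<Longrightarrow> qform_expressible (Suc m) (\<lambda>x y. (x^2 + y^2) * s x y)"
  by (rule qform_expressible_mult_linear[OF mpoly4_fun_vars(4) mpoly4_fun_uminus[OF mpoly4_fun_vars(2)]])
    (simp_all add: qform_def algebra_simps)

lemma qform_expressible_mult_prod:
  "qform_expressible m s \<Longrightarrow> qform_expressible (Suc m) (\<lambda>x y. (x * y) * s x y)"
  by (rule qform_expressible_mult_linear[OF mpoly4_fun_uminus[OF mpoly4_fun_vars(3)] mpoly4_fun_vars(1)])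
    (simp_all add: qform_def algebra_simps)

lemma qform_expressible_sum_squares: "qform_expressible 1 (\<lambda>x y. x^2 + y^2)"
  using qform_expressible_mult_sum_squares[OF qform_expressible_const[of 1]] by simp

lemma qform_expressible_prod: "qform_expressible 1 (\<lambda>x y. x * y)"
  using qform_expressible_mult_prod[OF qform_expressible_const[of 1]] by simp

lemma qform_expressible_power_sum_quotient:
  fixes z w W :: "complex \<Rightarrow> complex \<Rightarrow> complex"
  assumes s0: "qform_expressible 0 s0" "\<And>x y. z x y + w x y = W x y * s0 x y"
    and s1: "qform_expressible 1 s1" "\<And>x y. z x y * x^2 + w x y * y^2 = W x y * s1 x y"
  shows "\<exists>s. qform_expressible m s \<and> (\<forall>x y. z x y * (x^2)^m + w x y * (y^2)^m = W x y * s x y)"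
proof -
  define represents where "represents m s \<longleftrightarrow> qform_expressible m s \<and>
      (\<forall>x y. z x y * (x^2)^m + w x y * (y^2)^m = W x y * s x y)" for m s
  have "(\<exists>s. represents m s) \<and> (\<exists>s. represents (Suc m) s)"
  proof (induction m)
    case 0
    show ?case using s0 s1 unfolding represents_def by auto
  next
    case (Suc m)
    then obtain s s' where s: "represents m s" and s': "represents (Suc m) s'" by blast
    define s'' where "s'' x y = (x^2 + y^2) * s' x y - (x * y) * ((x * y) * s x y)" for x y
    have "qform_expressible (Suc (Suc m)) s''"
      using s s' unfolding represents_def s''_def
      by (intro qform_expressible_diff qform_expressible_mult_sum_squares qform_expressible_mult_prod) auto
    moreover have "z x y * (x^2)^Suc (Suc m) + w x y * (y^2)^Suc (Suc m) = W x y * s'' x y" for x y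
    proof -
      have "z x y * (x^2)^Suc (Suc m) + w x y * (y^2)^Suc (Suc m) =
          (x^2 + y^2) * (z x y * (x^2)^Suc m + w x y * (y^2)^Suc m)
          - (x * y) * ((x * y) * (z x y * (x^2)^m + w x y * (y^2)^m))"
        by (simp add: power2_eq_square algebra_simps)
      also have "\<dots> = W x y * s'' x y"
        using s s' unfolding represents_def s''_def by (simp add: algebra_simps)
      finally show ?thesis .
    qed
    ultimately show ?case using s' unfolding represents_def by blast
  qed
  then show ?thesis unfolding represents_def by blast
qed

definition coeff_family ::
    "nat \<Rightarrow> (complex \<Rightarrow> complex \<Rightarrow> complex) \<Rightarrow> (complex \<Rightarrow> complex \<Rightarrow> complex) \<Rightarrow> (nat \<Rightarrow> mpoly4) \<Rightarrow> bool" where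
  "coeff_family m W F c \<longleftrightarrow>
     (\<forall>r. finite {t. c r t \<noteq> 0}) \<and> (\<forall>r. m < r \<longrightarrow> c r = (\<lambda>_. 0)) \<and>
     (\<forall>a b al be x y. (be*a - al*b)^m * F x y =
        W x y * (\<Sum>r\<le>m. mp_eval (c r) a b al be * qform al be x y^(m - r) * qform a b x y^r))"

lemma coeff_family_finite: "coeff_family m W F c \<Longrightarrow> finite {t. c r t \<noteq> 0}"
  unfolding coeff_family_def by blast

lemma coeff_family_beyond: "coeff_family m W F c \<Longrightarrow> m < r \<Longrightarrow> c r = (\<lambda>_. 0)"
  unfolding coeff_family_def by blast

lemma coeff_family_eq:
  assumes "coeff_family m W F c"
  shows "(be*a - al*b)^m * F x y =
    W x y * (\<Sum>r\<le>m. mp_eval (c r) a b al be * qform al be x y^(m - r) * qform a b x y^r)"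
  using assms unfolding coeff_family_def by blast

lemma coeff_family_exists:
  assumes s: "qform_expressible m s" and F: "\<And>x y. F x y = W x y * s x y"
  shows "\<exists>c. coeff_family m W F c"
proof -
  obtain G where G: "\<forall>r. mpoly4_fun (G r)"
    and s_eq: "\<forall>a b al be x y. (be*a - al*b)^m * s x y =
        (\<Sum>r\<le>m. G r a b al be * qform al be x y^(m - r) * qform a b x y^r)"
    using s unfolding qform_expressible_def by blast
  obtain E where E: "\<forall>r. finite {t. E r t \<noteq> 0} \<and> G r = mp_eval (E r)"
    using choice[OF G[unfolded mpoly4_fun_def]] by blast
  define c where "c r = (if r \<le> m then E r else (\<lambda>_. 0))" for r
  have "coeff_family m W F c"
    unfolding coeff_family_def
  proof (intro conjI allI impI)
    show "finite {t. c r t \<noteq> 0}" for r using E by (simp add: c_def)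
    show "c r = (\<lambda>_. 0)" if "m < r" for r using that by (simp add: c_def)
    fix a b al be x y
    have "(be*a - al*b)^m * F x y = W x y * ((be*a - al*b)^m * s x y)"
      by (simp add: F)
    also have "\<dots> = W x y * (\<Sum>r\<le>m. mp_eval (c r) a b al be * qform al be x y^(m - r) * qform a b x y^r)"
      using E by (simp add: s_eq c_def)
    finally show "(be*a - al*b)^m * F x y =
        W x y * (\<Sum>r\<le>m. mp_eval (c r) a b al be * qform al be x y^(m - r) * qform a b x y^r)" .
  qed
  then show ?thesis by blast
qed

lemma finite_linear_roots:
  fixes c1 c0 :: "'a::field"
  assumes "c1 \<noteq> 0 \<or> c0 \<noteq> 0"
  shows "finite {p. c1 * p = c0}"
proof (cases "c1 = 0")
  case False
  then have "{p. c1 * p = c0} \<subseteq> {c0 / c1}" by (auto simp: field_simps)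
  then show ?thesis by (rule finite_subset) simp
qed (use assms in simp)

lemma qform_via_squares: "4 * qform c d x y = (2*c + d) * (x + y)^2 + (2*c - d) * (x - y)^2"
  by (simp add: qform_def power2_eq_square algebra_simps)

lemma qform_pair_from_squares:
  fixes al be A B p x y :: complex
  assumes D: "be*A - al*B \<noteq> 0"
    and sum: "(x + y)^2 = ((2*A - B) - (2*al - be) * p) / (be*A - al*B)"
    and diff: "(x - y)^2 = ((2*al + be) * p - (2*A + B)) / (be*A - al*B)"
  shows "qform al be x y = 1" "qform A B x y = p"
proof -
  let ?D = "be*A - al*B"
  have "4 * qform al be x y =
      ((2*al + be) * ((2*A - B) - (2*al - be) * p) + (2*al - be) * ((2*al + be) * p - (2*A + B))) / ?D"
    unfolding qform_via_squares sum diff by (simp add: add_divide_distrib)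
  also have "\<dots> = 4 * ?D / ?D" by (rule arg_cong[of _ _ "\<lambda>n. n / ?D"]) (simp add: algebra_simps)
  also have "\<dots> = 4" using D by (rule nonzero_mult_div_cancel_right)
  finally show "qform al be x y = 1" by simp
  have "4 * qform A B x y =
      ((2*A + B) * ((2*A - B) - (2*al - be) * p) + (2*A - B) * ((2*al + be) * p - (2*A + B))) / ?D"
    unfolding qform_via_squares sum diff by (simp add: add_divide_distrib)
  also have "\<dots> = 4 * p * ?D / ?D" by (rule arg_cong[of _ _ "\<lambda>n. n / ?D"]) (simp add: algebra_simps)
  also have "\<dots> = 4 * p" using D by (rule nonzero_mult_div_cancel_right)
  finally show "qform A B x y = p" by simp
qed

text \<open>The pair \<open>(Q\<^sub>\<alpha>\<^sub>\<beta>, Q\<^sub>A\<^sub>B)\<close> is a linear image of \<open>((x + y)\<^sup>2, (x - y)\<^sup>2)\<close> with determinant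
  \<open>(\<beta>A - \<alpha>B)/4\<close>, so it takes every value \<open>(1, p)\<close> off the finitely many \<open>p\<close> that force a square to vanish.\<close>

lemma qform_pair_attains_cofinite:
  fixes al be A B :: complex
  assumes D: "be*A - al*B \<noteq> 0"
  shows "finite {p. \<not> (\<exists>x y. x + y \<noteq> 0 \<and> x - y \<noteq> 0 \<and> qform al be x y = 1 \<and> qform A B x y = p)}"
proof (rule finite_subset)
  have "\<exists>x y. x + y \<noteq> 0 \<and> x - y \<noteq> 0 \<and> qform al be x y = 1 \<and> qform A B x y = p"
    if p: "(2*al - be) * p \<noteq> 2*A - B" "(2*al + be) * p \<noteq> 2*A + B" for p
  proof -
    define u where "u = ((2*A - B) - (2*al - be) * p) / (be*A - al*B)"
    define v where "v = ((2*al + be) * p - (2*A + B)) / (be*A - al*B)"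
    define x where "x = (csqrt u + csqrt v) / 2"
    define y where "y = (csqrt u - csqrt v) / 2"
    have "u \<noteq> 0" "v \<noteq> 0" using p D by (auto simp: u_def v_def)
    moreover have xy: "x + y = csqrt u" "x - y = csqrt v" by (simp_all add: x_def y_def field_simps)
    ultimately have "x + y \<noteq> 0" "x - y \<noteq> 0" by simp_all
    moreover have "(x + y)^2 = u" "(x - y)^2 = v" using xy by simp_all
    then have "qform al be x y = 1" "qform A B x y = p"
      unfolding u_def v_def by (rule qform_pair_from_squares[OF D])+
    ultimately show ?thesis by blast
  qed
  then show "{p. \<not> (\<exists>x y. x + y \<noteq> 0 \<and> x - y \<noteq> 0 \<and> qform al be x y = 1 \<and> qform A B x y = p)}
      \<subseteq> {p. (2*al - be) * p = 2*A - B} \<union> {p. (2*al + be) * p = 2*A + B}"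
    by blast
  have "2*al - be \<noteq> 0 \<or> 2*A - B \<noteq> 0"
    using D by (auto simp: algebra_simps)
  moreover have "2*al + be \<noteq> 0 \<or> 2*A + B \<noteq> 0"
  proof (rule ccontr)
    assume "\<not> ?thesis"
    then have "be = - (2*al)" "B = - (2*A)" by (simp_all only: de_Morgan_disj not_not add_eq_0_iff)
    then show False using D by (simp add: algebra_simps)
  qed
  ultimately show "finite ({p. (2*al - be) * p = 2*A - B} \<union> {p. (2*al + be) * p = 2*A + B})"
    by (simp add: finite_linear_roots)
qed

lemma qform_coeffs_unique:
  fixes e e' :: "nat \<Rightarrow> complex"
  assumes D: "be*A - al*B \<noteq> 0"
    and W: "\<And>x y. x + y \<noteq> 0 \<Longrightarrow> x - y \<noteq> 0 \<Longrightarrow> W x y \<noteq> 0"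
    and eq: "\<And>x y. W x y * (\<Sum>r\<le>m. e r * qform al be x y^(m - r) * qform A B x y^r) =
                   W x y * (\<Sum>r\<le>m. e' r * qform al be x y^(m - r) * qform A B x y^r)"
    and r: "r \<le> m"
  shows "e r = e' r"
proof (rule ccontr)
  assume "e r \<noteq> e' r"
  then have "finite {p. (\<Sum>i\<le>m. (e i - e' i) * p^i) = 0}"
    using r by (intro polyfun_roots_finite) auto
  moreover have "(\<Sum>i\<le>m. (e i - e' i) * p^i) = 0"
    if "\<exists>x y. x + y \<noteq> 0 \<and> x - y \<noteq> 0 \<and> qform al be x y = 1 \<and> qform A B x y = p" for p
  proof -
    from that obtain x y where "x + y \<noteq> 0" "x - y \<noteq> 0"
      and Q: "qform al be x y = 1" and P: "qform A B x y = p" by blast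
    then have "W x y \<noteq> 0" by (intro W)
    then have "(\<Sum>i\<le>m. e i * p^i) = (\<Sum>i\<le>m. e' i * p^i)"
      using eq[of x y] by (simp add: Q P)
    then show ?thesis by (simp add: left_diff_distrib sum_subtractf)
  qed
  then have "{p. (\<Sum>i\<le>m. (e i - e' i) * p^i) \<noteq> 0} \<subseteq>
      {p. \<not> (\<exists>x y. x + y \<noteq> 0 \<and> x - y \<noteq> 0 \<and> qform al be x y = 1 \<and> qform A B x y = p)}"
    by blast
  then have "finite {p. (\<Sum>i\<le>m. (e i - e' i) * p^i) \<noteq> 0}"
    using qform_pair_attains_cofinite[OF D] by (rule finite_subset)
  ultimately have "finite (UNIV :: complex set)"
    by (rule_tac finite_subset[of _ "{p. _ p = 0} \<union> {p. _ p \<noteq> 0}"]) auto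
  then show False by (simp add: infinite_UNIV_char_0)
qed

lemma eq_const_by_continuity:
  fixes g :: "'a::{perfect_space, t2_space} \<Rightarrow> 'b::t2_space"
  assumes "finite X" and "\<And>t. t \<notin> X \<Longrightarrow> g t = c" and "continuous (at w) g"
  shows "g w = c"
proof -
  have "eventually (\<lambda>t. \<forall>x\<in>X. t \<noteq> x) (at w)"
    using assms(1) by (intro eventually_ball_finite) (auto intro: eventually_neq_at_within)
  then have "eventually (\<lambda>t. g t = c) (at w)"
    by eventually_elim (use assms(2) in auto)
  then have "(g \<longlongrightarrow> c) (at w)" by (rule tendsto_eventually)
  moreover have "(g \<longlongrightarrow> g w) (at w)" using assms(3) by (simp add: continuous_at)
  ultimately show ?thesis using tendsto_unique[OF at_neq_bot] by blast
qed

text \<open>On the hypersurface \<open>\<beta>a = \<alpha>b\<close> perturb along \<open>(a, \<beta>) \<mapsto> (a + s, \<beta> + s)\<close>, which leaves it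
  for all but two values of \<open>s\<close>.\<close>

lemma mp_eval_eq_0_if_eq_0_off_degenerate:
  assumes "\<And>a b al be. be*a - al*b \<noteq> 0 \<Longrightarrow> mp_eval e a b al be = 0"
  shows "mp_eval e a b al be = 0"
proof (cases "be*a - al*b = 0")
  case True
  have "mp_eval e (a + 0) b al (be + 0) = 0"
  proof (rule eq_const_by_continuity[of "{0, - (a + be)}" "\<lambda>s. mp_eval e (a + s) b al (be + s)"])
    fix s assume s: "s \<notin> {0, - (a + be)}"
    then have "s \<noteq> 0" by simp
    moreover have "a + be + s \<noteq> 0" using s unfolding add_eq_0_iff by simp
    moreover have "(be + s)*(a + s) - al*b = s * (a + be + s)"
      using True by (simp add: algebra_simps)
    ultimately show "mp_eval e (a + s) b al (be + s) = 0" by (intro assms) simp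
  qed (simp_all, intro continuous_intros)
  then show ?thesis by simp
next
  case False
  then show ?thesis by (rule assms)
qed

lemma coeff_family_unique:
  assumes c: "coeff_family m W F c" and c': "coeff_family m W F c'"
    and W: "\<And>x y. x + y \<noteq> 0 \<Longrightarrow> x - y \<noteq> 0 \<Longrightarrow> W x y \<noteq> 0"
  shows "c = c'"
proof (intro ext)
  fix r t
  note fin = coeff_family_finite[OF c] coeff_family_finite[OF c']
  show "c r t = c' r t"
  proof (cases "m < r")
    case True then show ?thesis using coeff_family_beyond[OF c] coeff_family_beyond[OF c'] by simp
  next
    case False
    have eval_eq: "mp_eval (c r) a b al be = mp_eval (c' r) a b al be" if "be*a - al*b \<noteq> 0" for a b al be
    proof (rule qform_coeffs_unique[OF that W])
      show "r \<le> m" using False by simp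
      show "W x y * (\<Sum>r\<le>m. mp_eval (c r) a b al be * qform al be x y^(m - r) * qform a b x y^r) =
          W x y * (\<Sum>r\<le>m. mp_eval (c' r) a b al be * qform al be x y^(m - r) * qform a b x y^r)" for x y
        by (rule trans[OF coeff_family_eq[OF c, symmetric] coeff_family_eq[OF c']])
    qed
    have "finite {t. c r t - c' r t \<noteq> 0}"
      by (rule finite_subset[of _ "{t. c r t \<noteq> 0} \<union> {t. c' r t \<noteq> 0}"]) (auto simp: fin)
    moreover have "mp_eval (\<lambda>t. c r t - c' r t) a b al be = 0" for a b al be
      using eval_eq by - (rule mp_eval_eq_0_if_eq_0_off_degenerate, simp add: mp_eval_diff fin)
    ultimately have "c r t - c' r t = 0"
      by (rule mp_eval_eq_0_imp_coeff_eq_0[of "\<lambda>t. c r t - c' r t"])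
    then show ?thesis by simp
  qed
qed

lemma sum_triangle_swap:
  "(\<Sum>k\<le>m. \<Sum>r=k..m. f k r) = (\<Sum>r\<le>(m::nat). \<Sum>k\<le>r. f k r)"
proof -
  have "(\<Sum>k\<le>m. \<Sum>r=k..m. f k r) = (\<Sum>k\<le>m. \<Sum>r | r \<in> {..m} \<and> k \<le> r. f k r)"
    by (intro sum.cong refl) (auto intro: sum.cong)
  also have "\<dots> = (\<Sum>r\<le>m. \<Sum>k | k \<in> {..m} \<and> k \<le> r. f k r)"
    by (rule sum.swap_restrict) auto
  also have "\<dots> = (\<Sum>r\<le>m. \<Sum>k\<le>r. f k r)"
    by (intro sum.cong refl) (auto intro: sum.cong)
  finally show ?thesis .
qed

lemma binomial_reexpansion:
  fixes \<psi> :: "nat \<Rightarrow> 'a::comm_ring_1"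
  shows "(\<Sum>k\<le>m. (\<Sum>r=k..m. of_nat (r choose k) * \<psi> r * \<xi>^(m - r) * \<eta>^(r - k)) * q^(m - k) * (\<xi>*p - \<eta>*q)^k)
       = \<xi>^m * (\<Sum>r\<le>m. \<psi> r * q^(m - r) * p^r)"
proof -
  let ?p = "\<xi>*p - \<eta>*q"
  have "(\<Sum>k\<le>m. (\<Sum>r=k..m. of_nat (r choose k) * \<psi> r * \<xi>^(m - r) * \<eta>^(r - k)) * q^(m - k) * ?p^k)
      = (\<Sum>r\<le>m. \<Sum>k\<le>r. of_nat (r choose k) * \<psi> r * \<xi>^(m - r) * \<eta>^(r - k) * q^(m - k) * ?p^k)"
    by (simp add: sum_distrib_right sum_triangle_swap)
  also have "\<dots> = (\<Sum>r\<le>m. \<psi> r * \<xi>^(m - r) * q^(m - r) * (\<Sum>k\<le>r. of_nat (r choose k) * ?p^k * (\<eta>*q)^(r - k)))"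
  proof (intro sum.cong refl)
    fix r assume r: "r \<in> {..m}"
    have "of_nat (r choose k) * \<psi> r * \<xi>^(m - r) * \<eta>^(r - k) * q^(m - k) * ?p^k
        = \<psi> r * \<xi>^(m - r) * q^(m - r) * (of_nat (r choose k) * ?p^k * (\<eta>*q)^(r - k))" if "k \<le> r" for k
    proof -
      have "q^(m - k) = q^(m - r) * q^(r - k)"
        using r that by (simp flip: power_add)
      then show ?thesis by (simp add: power_mult_distrib mult_ac)
    qed
    then show "(\<Sum>k\<le>r. of_nat (r choose k) * \<psi> r * \<xi>^(m - r) * \<eta>^(r - k) * q^(m - k) * ?p^k)
        = \<psi> r * \<xi>^(m - r) * q^(m - r) * (\<Sum>k\<le>r. of_nat (r choose k) * ?p^k * (\<eta>*q)^(r - k))"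
      by (simp add: sum_distrib_left)
  qed
  also have "\<dots> = (\<Sum>r\<le>m. \<xi>^m * (\<psi> r * q^(m - r) * p^r))"
  proof (intro sum.cong refl)
    fix r assume "r \<in> {..m}"
    then have pow: "\<xi>^(m - r) * \<xi>^r = \<xi>^m" by (simp flip: power_add)
    have "(\<Sum>k\<le>r. of_nat (r choose k) * ?p^k * (\<eta>*q)^(r - k)) = (\<xi>*p)^r"
      by (simp flip: binomial_ring)
    then have "\<psi> r * \<xi>^(m - r) * q^(m - r) * (\<Sum>k\<le>r. of_nat (r choose k) * ?p^k * (\<eta>*q)^(r - k))
        = (\<xi>^(m - r) * \<xi>^r) * (\<psi> r * q^(m - r) * p^r)"
      by (simp add: power_mult_distrib mult_ac)
    then show "\<psi> r * \<xi>^(m - r) * q^(m - r) * (\<Sum>k\<le>r. of_nat (r choose k) * ?p^k * (\<eta>*q)^(r - k))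
        = \<xi>^m * (\<psi> r * q^(m - r) * p^r)"
      unfolding pow .
  qed
  finally show ?thesis by (simp add: sum_distrib_left)
qed

lemma coeff_family_substitution_nonzero:
  assumes fam: "coeff_family m W F c"
    and W: "\<And>x y. x + y \<noteq> 0 \<Longrightarrow> x - y \<noteq> 0 \<Longrightarrow> W x y \<noteq> 0"
    and D: "be*a - al*b \<noteq> 0" and xi: "xi \<noteq> 0" and k: "k \<le> m"
  shows "(\<Sum>r=k..m. of_nat (r choose k) * mp_eval (c r) a b al be * xi^(m - r) * eta^(r - k))
       = mp_eval (c k) (a*xi - al*eta) (b*xi - be*eta) al be"
proof -
  define A where "A = a*xi - al*eta"
  define B where "B = b*xi - be*eta"
  define L where "L j = (\<Sum>r=j..m. of_nat (r choose j) * mp_eval (c r) a b al be * xi^(m - r) * eta^(r - j))" for j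
  have D': "be*A - al*B = xi * (be*a - al*b)" unfolding A_def B_def by (simp add: algebra_simps)
  have "L k = mp_eval (c k) A B al be"
  proof (rule qform_coeffs_unique[OF _ W _ k, where e = L and e' = "\<lambda>r. mp_eval (c r) A B al be"])
    show "be*A - al*B \<noteq> 0" using D xi by (simp add: D')
    fix x y
    have P: "qform A B x y = xi * qform a b x y - eta * qform al be x y"
      unfolding A_def B_def qform_def by (simp add: algebra_simps)
    have "W x y * (\<Sum>r\<le>m. L r * qform al be x y^(m - r) * qform A B x y^r)
        = xi^m * (W x y * (\<Sum>r\<le>m. mp_eval (c r) a b al be * qform al be x y^(m - r) * qform a b x y^r))"
      unfolding P L_def binomial_reexpansion by (simp add: ac_simps)
    also have "\<dots> = (be*A - al*B)^m * F x y"
      by (simp add: D' power_mult_distrib coeff_family_eq[OF fam])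
    also have "\<dots> = W x y * (\<Sum>r\<le>m. mp_eval (c r) A B al be * qform al be x y^(m - r) * qform A B x y^r)"
      by (rule coeff_family_eq[OF fam])
    finally show "W x y * (\<Sum>r\<le>m. L r * qform al be x y^(m - r) * qform A B x y^r)
        = W x y * (\<Sum>r\<le>m. mp_eval (c r) A B al be * qform al be x y^(m - r) * qform A B x y^r)" .
  qed
  then show ?thesis unfolding L_def A_def B_def .
qed

lemma coeff_family_substitution:
  assumes fam: "coeff_family m W F c"
    and W: "\<And>x y. x + y \<noteq> 0 \<Longrightarrow> x - y \<noteq> 0 \<Longrightarrow> W x y \<noteq> 0"
    and D: "be*a - al*b \<noteq> 0" and k: "k \<le> m"
  shows "(\<Sum>r=k..m. of_nat (r choose k) * mp_eval (c r) a b al be * xi^(m - r) * eta^(r - k))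
       = mp_eval (c k) (a*xi - al*eta) (b*xi - be*eta) al be"
proof -
  let ?g = "\<lambda>t. (\<Sum>r=k..m. of_nat (r choose k) * mp_eval (c r) a b al be * t^(m - r) * eta^(r - k))
       - mp_eval (c k) (a*t - al*eta) (b*t - be*eta) al be"
  have "?g xi = 0"
  proof (rule eq_const_by_continuity[where X = "{0}" and g = ?g and w = xi])
    show "?g t = 0" if "t \<notin> {0}" for t
      using coeff_family_substitution_nonzero[OF fam W D _ k, of t eta] that by simp
    show "continuous (at xi) ?g" by (intro continuous_intros)
  qed simp
  then show ?thesis by simp
qed

lemma coeff_family_ex1:
  assumes "qform_expressible m s" "\<And>x y. F x y = W x y * s x y"
    and "\<And>x y. x + y \<noteq> 0 \<Longrightarrow> x - y \<noteq> 0 \<Longrightarrow> W x y \<noteq> 0"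
  shows "\<exists>!c. coeff_family m W F c"
proof (rule ex_ex1I)
  show "\<exists>c. coeff_family m W F c" by (rule coeff_family_exists[OF assms(1,2)])
  show "c = c'" if "coeff_family m W F c" "coeff_family m W F c'" for c c'
    using that assms(3) by (rule coeff_family_unique)
qed

lemma is_Psi_family_iff:
  "is_Psi_family n c \<longleftrightarrow> coeff_family (n div 2) (\<lambda>x y. (x + y)^(n mod 2)) (\<lambda>x y. x^n + y^n) c"
  unfolding is_Psi_family_def coeff_family_def qform_def ..

lemma is_Phi_family_iff:
  "is_Phi_family n c \<longleftrightarrow>
     coeff_family ((n - 1) div 2) (\<lambda>x y. (x - y) * (x + y)^((n - 1) mod 2)) (\<lambda>x y. x^n - y^n) c"
  unfolding is_Phi_family_def coeff_family_def qform_def ..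

lemma Psi_family_ex1: "\<exists>!c. is_Psi_family n c"
proof -
  obtain s where "qform_expressible (n div 2) s" "\<And>x y. x^n + y^n = (x + y)^(n mod 2) * s x y"
  proof (cases "even n")
    case True
    then obtain m where n: "n = 2 * m" ..
    obtain s where "qform_expressible m s" "\<forall>x y. 1 * (x^2)^m + 1 * (y^2)^m = 1 * s x y"
      using qform_expressible_power_sum_quotient[of "\<lambda>x y. 2" "\<lambda>x y. 1" "\<lambda>x y. 1" "\<lambda>x y. 1"
          "\<lambda>x y. x^2 + y^2" m] qform_expressible_const[of 2] qform_expressible_sum_squares
      by auto
    with that show ?thesis by (simp add: n power_mult)
  next
    case False
    then obtain m where n: "n = 2 * m + 1" using oddE by blast
    obtain s where "qform_expressible m s" "\<forall>x y. x * (x^2)^m + y * (y^2)^m = (x + y) * s x y"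
      using qform_expressible_power_sum_quotient[of "\<lambda>x y. 1" "\<lambda>x y. x" "\<lambda>x y. y" "\<lambda>x y. x + y"
          "\<lambda>x y. x^2 + y^2 - x * y" m] qform_expressible_const[of 1]
        qform_expressible_diff[OF qform_expressible_sum_squares qform_expressible_prod]
      by (auto simp: power2_eq_square algebra_simps)
    with that show ?thesis by (simp add: n power_mult)
  qed
  then show ?thesis unfolding is_Psi_family_iff by (intro coeff_family_ex1) auto
qed

lemma Phi_family_ex1:
  assumes "n \<ge> 1"
  shows "\<exists>!c. is_Phi_family n c"
proof -
  obtain s where "qform_expressible ((n - 1) div 2) s"
    "\<And>x y. x^n - y^n = (x - y) * (x + y)^((n - 1) mod 2) * s x y"
  proof (cases "even n")
    case True
    then obtain m0 where "n = 2 * m0" ..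
    with assms obtain m where n: "n = 2 * m + 2" by (cases m0) auto
    obtain s where "qform_expressible m s"
      "\<forall>x y. x^2 * (x^2)^m + (- (y^2)) * (y^2)^m = ((x - y) * (x + y)) * s x y"
      using qform_expressible_power_sum_quotient[of "\<lambda>x y. 1" "\<lambda>x y. x^2" "\<lambda>x y. - (y^2)"
          "\<lambda>x y. (x - y) * (x + y)" "\<lambda>x y. x^2 + y^2" m] qform_expressible_const[of 1]
        qform_expressible_sum_squares
      by (auto simp: power2_eq_square algebra_simps)
    moreover have "(n - 1) div 2 = m" "(n - 1) mod 2 = 1" "x^n = x^2 * (x^2)^m" for x :: complex
      by (simp_all add: n power_add power_mult power2_eq_square)
    ultimately show ?thesis using that by simp
  next
    case False
    then obtain m where n: "n = 2 * m + 1" using oddE by blast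
    obtain s where "qform_expressible m s" "\<forall>x y. x * (x^2)^m + (- y) * (y^2)^m = (x - y) * s x y"
      using qform_expressible_power_sum_quotient[of "\<lambda>x y. 1" "\<lambda>x y. x" "\<lambda>x y. - y" "\<lambda>x y. x - y"
          "\<lambda>x y. x^2 + y^2 + x * y" m] qform_expressible_const[of 1]
        qform_expressible_add[OF qform_expressible_sum_squares qform_expressible_prod]
      by (auto simp: power2_eq_square algebra_simps)
    with that show ?thesis by (simp add: n power_mult)
  qed
  then show ?thesis unfolding is_Phi_family_iff by (intro coeff_family_ex1) auto
qed

theorem theorem10p6:
  fixes a b al be xi eta :: complex and n k :: nat
  assumes "be*a - al*b \<noteq> 0" and "n \<ge> 1"
  shows "(k \<le> n div 2 \<longrightarrow>
           (\<Sum>r=k..n div 2. of_nat (r choose k) * Psi n r a b al be * xi^(n div 2 - r) * eta^(r - k))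
           = Psi n k (a*xi - al*eta) (b*xi - be*eta) al be)
       \<and> (k \<le> (n - 1) div 2 \<longrightarrow>
           (\<Sum>r=k..(n - 1) div 2. of_nat (r choose k) * Phi n r a b al be * xi^((n - 1) div 2 - r) * eta^(r - k))
           = Phi n k (a*xi - al*eta) (b*xi - be*eta) al be)"
proof (intro conjI impI)
  have Psi: "coeff_family (n div 2) (\<lambda>x y. (x + y)^(n mod 2)) (\<lambda>x y. x^n + y^n) (THE c. is_Psi_family n c)"
    using theI'[OF Psi_family_ex1] unfolding is_Psi_family_iff .
  show "k \<le> n div 2 \<Longrightarrow>
      (\<Sum>r=k..n div 2. of_nat (r choose k) * Psi n r a b al be * xi^(n div 2 - r) * eta^(r - k))
      = Psi n k (a*xi - al*eta) (b*xi - be*eta) al be"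
    unfolding Psi_def by (rule coeff_family_substitution[OF Psi _ assms(1)]) simp
  have Phi: "coeff_family ((n - 1) div 2) (\<lambda>x y. (x - y) * (x + y)^((n - 1) mod 2)) (\<lambda>x y. x^n - y^n)
      (THE c. is_Phi_family n c)"
    using theI'[OF Phi_family_ex1[OF assms(2)]] unfolding is_Phi_family_iff .
  show "k \<le> (n - 1) div 2 \<Longrightarrow>
      (\<Sum>r=k..(n - 1) div 2. of_nat (r choose k) * Phi n r a b al be * xi^((n - 1) div 2 - r) * eta^(r - k))
      = Phi n k (a*xi - al*eta) (b*xi - be*eta) al be"
    unfolding Phi_def by (rule coeff_family_substitution[OF Phi _ assms(1)]) simp
qed

end
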